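(* Let $\epsilon\in(0,1)$ and let $P_M=\frac{1}{2M}\sum_{i=1}^N\frac{\sigma_n^2d_i^\alpha}{\sigma_{v,i}^2}$. (a) For every $M\ge1$, $P_D^{(M)}(P_M)\ \ge\ \epsilon^{1/(1+\frac{\sigma_\theta^2}{3}\sum_{i=1}^N\sigma_{v,i}^{-2})}\ >\ \epsilon$. (b) For every $\mathbf{h}\in\mathbb{C}^N$ with all entries nonzero and every $M\ge1$, $\epsilon<P_D^s(P_M;\mathbf{h})\le\epsilon^{1/(1+\zeta_M)}$, where $\zeta_M=\frac{\mathbf{h}^H\mathbf{h}}{2M}\sum_{i=1}^N\frac{\sigma_\theta^2 d_i^\alpha}{\sigma_{v,i}^2}$; in particular, if $\mathbf{h}$ is random with independent entries $h_i\sim\mathcal{CN}(0,d_i^{-\alpha})$, then $\zeta_M\to0$ in probability and $P_D^s(P_M;\mathbf{h})\to\epsilon$ in probability as $M\to\infty$. (c) For every $M\ge1$, every $P>0$ and every $\mathbf{h}$ with all entries nonzero, both $P_D^{(M)}(P)$ and $P_D^s(P;\mathbf{h})$ are at most $\epsilon^{1/(1+\sigma_\theta^2\sum_{i=1}^N\sigma_{v,i}^{-2})}$, are nondecreasing in $P$, and converge to $\epsilon^{1/(1+\sigma_\theta^2\sum_{i=1}^N\sigma_{v,i}^{-2})}$ as $P\to\infty$.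
   Context: Constants: $\sigma_\theta^2,\sigma_n^2>0$, $\sigma_{v,i}^2>0$, $d_i>0$, $\alpha>0$, $i=1,\dots,N$; $\mathbf{V}=\mathrm{diag}\{\sigma_{v,1}^2,\dots,\sigma_{v,N}^2\}$. Multi-antenna (large-$M$) detector: for $x\in[0,\infty)^N$ let $g_M(x)=\sum_{i=1}^N\frac{Mx_i}{\sigma_n^2d_i^\alpha+\sigma_{v,i}^2Mx_i}$ (the almost-sure large-$M$ limit of the NP detection SNR with $|a_i|^2=x_i$), $G_M(P)=\max\{g_M(x):x\ge0,\ \sum_ix_i=P\}$, and $P_D^{(M)}(P)=\epsilon^{1/(1+\sigma_\theta^2G_M(P))}$ (optimal detection probability at false-alarm probability $\epsilon$). Single-antenna detector: with scalar channel gains $\mathbf{h}=[h_1,\dots,h_N]^T$, $\mathbf{F}=\mathrm{diag}\{h_1,\dots,h_N\}$, the received signal is $y=\mathbf{a}^H\mathbf{F}\mathbf{v}+n$ under $\mathcal{H}_0$ and $y=\mathbf{a}^H\mathbf{h}\theta+\mathbf{a}^H\mathbf{F}\mathbf{v}+n$ under $\mathcal{H}_1$, $n\sim\mathcal{CN}(0,\sigma_n^2)$. Its NP detection probability at false-alarm probability $\epsilon$ is $\epsilon^{1/(1+\rho(\mathbf{a}))}$ with $\rho(\mathbf{a})=\frac{\sigma_\theta^2\mathbf{a}^H\mathbf{h}\mathbf{h}^H\mathbf{a}}{\mathbf{a}^H\mathbf{F}\mathbf{V}\mathbf{F}^H\mathbf{a}+\sigma_n^2}$. Define $S(P;\mathbf{h})=\max\{\rho(\mathbf{a}):\mathbf{a}\in\mathbb{C}^N,\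 \mathbf{a}^H\mathbf{a}=P\}$ and $P_D^s(P;\mathbf{h})=\epsilon^{1/(1+S(P;\mathbf{h}))}$. *)

theory Defs
  imports "HOL-Probability.Probability"
begin

text \<open>Indices i = 1..N are rendered as i < N (i.e. 0..N-1). Vectors in R^N / C^N are
  functions nat => real / complex of which only the entries i < N matter.
  Parameters: sn2 = sigma_n^2, st2 = sigma_theta^2, sv2 i = sigma_{v,i}^2, d i = d_i, alpha.\<close>

text \<open>Large-M limit of the detection SNR, g_M(x).\<close>
definition gM :: "nat \<Rightarrow> real \<Rightarrow> (nat \<Rightarrow> real) \<Rightarrow> (nat \<Rightarrow> real) \<Rightarrow> real \<Rightarrow> nat \<Rightarrow> (nat \<Rightarrow> real) \<Rightarrow> real" where
  "gM N sn2 sv2 d alpha M x =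
     (\<Sum>i<N. real M * x i / (sn2 * d i powr alpha + sv2 i * real M * x i))"

text \<open>G_M(P) = max { g_M(x) : x >= 0, sum x = P } (the maximum is attained; rendered as Sup).\<close>
definition GM :: "nat \<Rightarrow> real \<Rightarrow> (nat \<Rightarrow> real) \<Rightarrow> (nat \<Rightarrow> real) \<Rightarrow> real \<Rightarrow> nat \<Rightarrow> real \<Rightarrow> real" where
  "GM N sn2 sv2 d alpha M P =
     Sup (gM N sn2 sv2 d alpha M ` {x. (\<forall>i<N. 0 \<le> x i) \<and> (\<Sum>i<N. x i) = P})"

definition PD_multi :: "real \<Rightarrow> real \<Rightarrow> nat \<Rightarrow> real \<Rightarrow> (nat \<Rightarrow> real) \<Rightarrow> (nat \<Rightarrow> real) \<Rightarrow> real \<Rightarrow> nat \<Rightarrow> real \<Rightarrow> real" where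
  "PD_multi eps st2 N sn2 sv2 d alpha M P = eps powr (1 / (1 + st2 * GM N sn2 sv2 d alpha M P))"

text \<open>Single-antenna SNR rho(a) = st2 a^H h h^H a / (a^H F V F^H a + sn2), with
  F = diag(h), V = diag(sv2): a^H h h^H a = |a^H h|^2 and
  a^H F V F^H a = sum_i |a_i|^2 |h_i|^2 sv2_i.\<close>
definition rho :: "real \<Rightarrow> nat \<Rightarrow> real \<Rightarrow> (nat \<Rightarrow> real) \<Rightarrow> (nat \<Rightarrow> complex) \<Rightarrow> (nat \<Rightarrow> complex) \<Rightarrow> real" where
  "rho st2 N sn2 sv2 h a =
     st2 * (cmod (\<Sum>i<N. cnj (a i) * h i))\<^sup>2 /
       ((\<Sum>i<N. (cmod (a i))\<^sup>2 * (cmod (h i))\<^sup>2 * sv2 i) + sn2)"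

definition S_single :: "real \<Rightarrow> nat \<Rightarrow> real \<Rightarrow> (nat \<Rightarrow> real) \<Rightarrow> real \<Rightarrow> (nat \<Rightarrow> complex) \<Rightarrow> real" where
  "S_single st2 N sn2 sv2 P h = Sup (rho st2 N sn2 sv2 h ` {a. (\<Sum>i<N. (cmod (a i))\<^sup>2) = P})"

definition PD_single :: "real \<Rightarrow> real \<Rightarrow> nat \<Rightarrow> real \<Rightarrow> (nat \<Rightarrow> real) \<Rightarrow> real \<Rightarrow> (nat \<Rightarrow> complex) \<Rightarrow> real" where
  "PD_single eps st2 N sn2 sv2 P h = eps powr (1 / (1 + S_single st2 N sn2 sv2 P h))"

definition cgauss_density :: "real \<Rightarrow> complex \<Rightarrow> ennreal" where
  "cgauss_density s z = ennreal (exp (- (cmod z)\<^sup>2 / s) / (pi * s))"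

text \<open>Convergence in probability of X_n to the constant c (stated with outer probability, so
  that it does not depend on measurability of the events).\<close>
definition conv_in_prob :: "'a measure \<Rightarrow> (nat \<Rightarrow> 'a \<Rightarrow> real) \<Rightarrow> real \<Rightarrow> bool" where
  "conv_in_prob Q X c \<longleftrightarrow>
     (\<forall>e>0. \<forall>\<delta>>0. eventually (\<lambda>n. \<exists>A\<in>sets Q.
        {\<omega>\<in>space Q. \<bar>X n \<omega> - c\<bar> > e} \<subseteq> A \<and> measure Q A < \<delta>) sequentially)"

end

theory Submission
  imports Defs
begin

text \<open>
  Both detectors have detection probability \<open>eps powr (1 / (1 + u))\<close>, where \<open>u\<close> is an
  optimal SNR.  This map is increasing in \<open>u \<ge> 0\<close>, equals \<open>eps\<close> at \<open>u = 0\<close> and is continuous,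
  so every claim of the theorem reduces to a bound or a limit for the optimal SNR:

  \<^item> Each summand of the large-M SNR \<open>g\<^sub>M\<close> is a saturating function \<open>m y / (A + s m y)\<close> of the
    power \<open>y\<close>: increasing, below \<open>1/s\<close> and tending to \<open>1/s\<close>.  Hence \<open>G\<^sub>M(P)\<close> lies in
    \<open>[0, kappa]\<close> with \<open>kappa = \<Sum>\<^sub>i 1/\<sigma>\<^sub>v\<^sub>,\<^sub>i\<^sup>2\<close>, is monotone and tends to \<open>kappa\<close>; allocating to
    sensor \<open>i\<close> half its noise-to-variance ratio, divided by \<open>M\<close>, yields exactly \<open>kappa/3\<close> (part (a)).
  \<^item> A weighted Cauchy-Schwarz inequality bounds the single-antenna SNR \<open>\<rho>(a)\<close> by \<open>\<sigma>\<^sub>\<theta>\<^sup>2 kappa\<close>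
    and, ignoring interference, by \<open>\<sigma>\<^sub>\<theta>\<^sup>2 P \<parallel>h\<parallel>\<^sup>2 / \<sigma>\<^sub>n\<^sup>2\<close>, which equals \<open>\<zeta>\<^sub>M\<close> at \<open>P = P\<^sub>M\<close>.  The
    matched beamformer \<open>a\<^sub>i \<propto> 1 / (conj h\<^sub>i \<sigma>\<^sub>v\<^sub>,\<^sub>i\<^sup>2)\<close> attains a saturating lower bound, and
    rescaling a beamformer never lowers its SNR; this gives parts (b) and (c).
  \<^item> For a random channel, \<open>\<zeta>\<^sub>M\<close> is a fixed random variable divided by \<open>M\<close>, hence tends to 0
    in probability; convergence in probability then transfers along the SNR bounds.
\<close>

section \<open>The detection probability as a function of the SNR\<close>

lemma detection_prob_mono:
  fixes eps u v :: real
  assumes "0 < eps" "eps < 1" "0 \<le> u" "u \<le> v"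
  shows "eps powr (1 / (1 + u)) \<le> eps powr (1 / (1 + v))"
proof (rule powr_mono')
  show "1 / (1 + v) \<le> 1 / (1 + u)" using assms by (intro divide_left_mono) auto
qed (use assms in auto)

lemma detection_prob_gt_false_alarm:
  fixes eps u :: real
  assumes "0 < eps" "eps < 1" "0 < u"
  shows "eps < eps powr (1 / (1 + u))"
  using powr_less_mono'[of eps "1 / (1 + u)" 1] assms by simp

lemma detection_prob_tendsto:
  fixes eps L :: real and f :: "'a \<Rightarrow> real"
  assumes "0 < eps" "(f \<longlongrightarrow> L) F" "1 + L \<noteq> 0"
  shows "((\<lambda>x. eps powr (1 / (1 + f x))) \<longlongrightarrow> eps powr (1 / (1 + L))) F"
  using assms by (intro tendsto_intros) auto

lemma detection_prob_near_false_alarm: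
  fixes eps e :: real
  assumes "0 < eps" "eps < 1" "0 < e"
  obtains \<delta> where "\<delta> > 0" "eps powr (1 / (1 + \<delta>)) < eps + e"
proof -
  have "((\<lambda>u. eps powr (1 / (1 + u))) \<longlongrightarrow> eps powr (1 / (1 + 0))) (at_right (0::real))"
    using assms by (intro detection_prob_tendsto tendsto_ident_at) auto
  then have "\<forall>\<^sub>F u in at_right 0. eps powr (1 / (1 + u)) < eps + e"
    using assms by (intro order_tendstoD(2)) auto
  then obtain b :: real where "b > 0" "\<And>u. 0 < u \<Longrightarrow> u < b \<Longrightarrow> eps powr (1 / (1 + u)) < eps + e"
    unfolding eventually_at_right_field by auto
  then show ?thesis using that[of "b / 2"] by simp
qed

section \<open>Saturating SNR terms\<close>

text \<open>The function \<open>y \<mapsto> m y / (A + s m y)\<close> describes the SNR contributed by a sensor whose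
  signal of power \<open>y\<close> is amplified by \<open>m\<close>, against noise \<open>A\<close> and sensing variance \<open>s\<close>.\<close>

lemma saturation_le:
  fixes m A s y :: real
  assumes "A > 0" "s > 0" "m \<ge> 0" "y \<ge> 0"
  shows "m * y / (A + s * m * y) \<le> 1 / s"
proof -
  have pos: "A + s * m * y > 0" using assms by (simp add: add_pos_nonneg)
  have "m * y * s \<le> A + s * m * y" using assms by (simp add: algebra_simps)
  then show ?thesis using pos assms by (simp add: divide_le_eq field_simps)
qed

lemma saturation_mono:
  fixes m A s y y' :: real
  assumes "A > 0" "s \<ge> 0" "m \<ge> 0" "0 \<le> y" "y \<le> y'"
  shows "m * y / (A + s * m * y) \<le> m * y' / (A + s * m * y')"
proof -
  have p: "A + s * m * y > 0" "A + s * m * y' > 0"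
    using assms by (auto intro!: add_pos_nonneg)
  have "m * y' * (A + s * m * y) - m * y * (A + s * m * y') = m * A * (y' - y)"
    by (simp add: algebra_simps)
  also have "\<dots> \<ge> 0" using assms by simp
  finally show ?thesis using p by (simp add: divide_le_eq le_divide_eq field_simps)
qed

lemma saturation_tendsto:
  fixes m A s :: real and g :: "'a \<Rightarrow> real"
  assumes "m > 0" "A > 0" "s > 0" and g: "filterlim g at_top F"
  shows "((\<lambda>x. m * g x / (A + s * m * g x)) \<longlongrightarrow> 1 / s) F"
proof -
  have "filterlim (\<lambda>x. m * g x) at_top F"
    using assms by (intro filterlim_tendsto_pos_mult_at_top[OF tendsto_const]) auto
  then have "((\<lambda>x. inverse (m * g x)) \<longlongrightarrow> 0) F"
    by (rule tendsto_inverse_0_at_top)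
  then have "((\<lambda>x. 1 / (A * inverse (m * g x) + s)) \<longlongrightarrow> 1 / (A * 0 + s)) F"
    using assms by (intro tendsto_intros) auto
  moreover have "\<forall>\<^sub>F x in F. 1 / (A * inverse (m * g x) + s) = m * g x / (A + s * m * g x)"
    using filterlim_at_top_dense[THEN iffD1, OF g, rule_format, of 0]
    by eventually_elim (use assms in \<open>simp add: field_simps\<close>)
  ultimately show ?thesis using assms by (simp add: tendsto_cong)
qed

lemma saturation_at_half_noise:
  fixes m A s :: real
  assumes "A > 0" "s > 0" "m > 0"
  shows "m * (A / s / (2 * m)) / (A + s * m * (A / s / (2 * m))) = 1 / s / 3"
proof -
  have "m * (A / s / (2 * m)) = A / (2 * s)" "s * m * (A / s / (2 * m)) = A / 2"
    using assms by simp_all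
  then show ?thesis using assms by (simp add: field_simps)
qed

section \<open>Convergence in probability\<close>

lemma conv_in_prob_transfer:
  assumes Y: "conv_in_prob Q Y c"
    and dev: "\<And>e. e > 0 \<Longrightarrow> \<exists>\<delta>>0. \<forall>M. \<forall>\<omega>\<in>space Q. e < \<bar>X M \<omega> - c'\<bar> \<longrightarrow> \<delta> < \<bar>Y M \<omega> - c\<bar>"
  shows "conv_in_prob Q X c'"
  unfolding conv_in_prob_def
proof (intro allI impI)
  fix e \<eta> :: real assume "e > 0" "\<eta> > 0"
  obtain \<delta> where "\<delta> > 0" and \<delta>: "\<And>M \<omega>. \<omega> \<in> space Q \<Longrightarrow> e < \<bar>X M \<omega> - c'\<bar> \<Longrightarrow> \<delta> < \<bar>Y M \<omega> - c\<bar>"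
    using dev[OF \<open>e > 0\<close>] by blast
  have "\<forall>\<^sub>F M in sequentially. \<exists>A\<in>sets Q. {\<omega>\<in>space Q. \<delta> < \<bar>Y M \<omega> - c\<bar>} \<subseteq> A \<and> measure Q A < \<eta>"
    using Y \<open>\<delta> > 0\<close> \<open>\<eta> > 0\<close> unfolding conv_in_prob_def by blast
  then show "\<forall>\<^sub>F M in sequentially. \<exists>A\<in>sets Q. {\<omega>\<in>space Q. e < \<bar>X M \<omega> - c'\<bar>} \<subseteq> A \<and> measure Q A < \<eta>"
    by eventually_elim (use \<delta> in blast)
qed

text \<open>A fixed real random variable divided by \<open>M\<close> tends to 0 in probability: the tail events
  \<open>{\<bar>f\<bar> > n}\<close> decrease to the empty set, so their probabilities become arbitrarily small.\<close>
lemma conv_in_prob_divide_index: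
  assumes "prob_space Q" and f: "f \<in> borel_measurable Q"
  shows "conv_in_prob Q (\<lambda>M \<omega>. f \<omega> / real M) 0"
  unfolding conv_in_prob_def
proof (intro allI impI)
  interpret Q: prob_space Q by fact
  fix e \<eta> :: real assume e: "e > 0" and \<eta>: "\<eta> > 0"
  define B where "B n = {\<omega>\<in>space Q. real n < \<bar>f \<omega>\<bar>}" for n :: nat
  have B_sets: "B n \<in> sets Q" for n unfolding B_def using f by measurable
  have "(\<Inter>n. B n) = {}"
  proof (rule equals0I)
    fix \<omega> assume "\<omega> \<in> (\<Inter>n. B n)"
    then have "real (nat \<lceil>\<bar>f \<omega>\<bar>\<rceil>) < \<bar>f \<omega>\<bar>" unfolding B_def by blast
    then show False by (meson not_le real_nat_ceiling_ge)
  qed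
  moreover have "(\<lambda>n. measure Q (B n)) \<longlonglongrightarrow> measure Q (\<Inter>n. B n)"
    using B_sets by (intro Q.finite_Lim_measure_decseq) (auto simp: B_def decseq_def)
  ultimately have "\<forall>\<^sub>F n in sequentially. measure Q (B n) < \<eta>"
    using \<eta> by (intro order_tendstoD(2)) auto
  then obtain n0 where n0: "measure Q (B n0) < \<eta>" by (auto simp: eventually_sequentially)
  have "{\<omega>\<in>space Q. e < \<bar>f \<omega> / real M - 0\<bar>} \<subseteq> B n0" if M: "real n0 / e < real M" for M
  proof
    fix \<omega> assume \<omega>: "\<omega> \<in> {\<omega>\<in>space Q. e < \<bar>f \<omega> / real M - 0\<bar>}"
    have "real M > 0" using M e by (smt (verit) divide_nonneg_pos of_nat_0_le_iff)
    then have "e * real M < \<bar>f \<omega>\<bar>" using \<omega> by (simp add: abs_divide less_divide_eq)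
    moreover have "real n0 < e * real M" using M e by (simp add: pos_divide_less_eq mult.commute)
    ultimately show "\<omega> \<in> B n0" using \<omega> unfolding B_def by simp
  qed
  moreover have "\<forall>\<^sub>F M in sequentially. real n0 / e < real M"
    by (rule filterlim_real_sequentially[THEN filterlim_at_top_dense[THEN iffD1], rule_format])
  ultimately show "\<forall>\<^sub>F M in sequentially. \<exists>A\<in>sets Q. {\<omega>\<in>space Q. e < \<bar>f \<omega> / real M - 0\<bar>} \<subseteq> A \<and> measure Q A < \<eta>"
    using n0 B_sets by (auto elim!: eventually_mono)
qed

section \<open>Cauchy-Schwarz bounds for the beamformer output\<close>

lemma norm_sum_cnj_mult_le:
  "cmod (\<Sum>i<N. cnj (a i) * h i) \<le> (\<Sum>i<N. cmod (a i) * cmod (h i))"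
  by (rule order_trans[OF norm_sum]) (simp add: norm_mult)

lemma cauchy_schwarz_complex:
  "(cmod (\<Sum>i<N. cnj (a i) * h i))\<^sup>2 \<le> (\<Sum>i<N. (cmod (a i))\<^sup>2) * (\<Sum>i<N. (cmod (h i))\<^sup>2)"
proof -
  have "(cmod (\<Sum>i<N. cnj (a i) * h i))\<^sup>2 \<le> (\<Sum>i<N. cmod (a i) * cmod (h i))\<^sup>2"
    by (rule power_mono[OF norm_sum_cnj_mult_le]) simp
  also have "\<dots> \<le> (\<Sum>i<N. (cmod (a i))\<^sup>2) * (\<Sum>i<N. (cmod (h i))\<^sup>2)"
    by (rule Cauchy_Schwarz_ineq_sum)
  finally show ?thesis .
qed

text \<open>Weighted form: splitting \<open>\<bar>a\<^sub>i\<bar>\<bar>h\<^sub>i\<bar> = (\<bar>a\<^sub>i\<bar>\<bar>h\<^sub>i\<bar>\<surd>w\<^sub>i) \<cdot> (1/\<surd>w\<^sub>i)\<close> bounds the beamformer gain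
  by the weighted interference power times \<open>\<Sum> 1/w\<^sub>i\<close>.\<close>
lemma weighted_cauchy_schwarz_complex:
  assumes w: "\<And>i. i < N \<Longrightarrow> w i > (0::real)"
  shows "(cmod (\<Sum>i<N. cnj (a i) * h i))\<^sup>2
           \<le> (\<Sum>i<N. (cmod (a i))\<^sup>2 * (cmod (h i))\<^sup>2 * w i) * (\<Sum>i<N. 1 / w i)"
proof -
  have "(cmod (\<Sum>i<N. cnj (a i) * h i))\<^sup>2 \<le> (\<Sum>i<N. cmod (a i) * cmod (h i))\<^sup>2"
    by (rule power_mono[OF norm_sum_cnj_mult_le]) simp
  also have "(\<Sum>i<N. cmod (a i) * cmod (h i))
      = (\<Sum>i<N. (cmod (a i) * cmod (h i) * sqrt (w i)) * (1 / sqrt (w i)))"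
  proof (rule sum.cong)
    fix i assume "i \<in> {..<N}"
    then have "w i > 0" using w by simp
    then show "cmod (a i) * cmod (h i) = cmod (a i) * cmod (h i) * sqrt (w i) * (1 / sqrt (w i))"
      by simp
  qed simp
  also have "(\<dots>)\<^sup>2 \<le> (\<Sum>i<N. (cmod (a i) * cmod (h i) * sqrt (w i))\<^sup>2) * (\<Sum>i<N. (1 / sqrt (w i))\<^sup>2)"
    by (rule Cauchy_Schwarz_ineq_sum)
  also have "\<dots> = (\<Sum>i<N. (cmod (a i))\<^sup>2 * (cmod (h i))\<^sup>2 * w i) * (\<Sum>i<N. 1 / w i)"
    using w by (intro arg_cong2[where f = "(*)"] sum.cong)
      (auto simp: power_mult_distrib power_divide less_imp_le)
  finally show ?thesis .
qed

section \<open>The sensor model\<close>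

locale detection_model =
  fixes N :: nat and st2 sn2 alpha :: real and sv2 d :: "nat \<Rightarrow> real"
  assumes N_pos: "N \<ge> 1" and st2_pos: "st2 > 0" and sn2_pos: "sn2 > 0"
    and sv2_pos: "\<And>i. i < N \<Longrightarrow> sv2 i > 0" and d_pos: "\<And>i. i < N \<Longrightarrow> d i > 0"
begin

text \<open>\<open>st2 * kappa\<close> is the SNR ceiling that neither detector can exceed at any power.\<close>
abbreviation kappa :: real where "kappa \<equiv> \<Sum>i<N. 1 / sv2 i"

lemma kappa_pos: "kappa > 0"
  using N_pos sv2_pos by (intro sum_pos) (auto simp: lessThan_empty_iff)

lemma interference_nonneg: "0 \<le> (\<Sum>i<N. (cmod (a i))\<^sup>2 * (cmod (h i))\<^sup>2 * sv2 i)"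
  using sv2_pos by (intro sum_nonneg) (simp add: less_imp_le)

lemma rho_nonneg: "0 \<le> rho st2 N sn2 sv2 h a"
  unfolding rho_def using interference_nonneg[of a h] st2_pos sn2_pos by simp

text \<open>The SNR ceiling, from the weighted Cauchy-Schwarz inequality with weights \<open>\<sigma>\<^sub>v\<^sub>,\<^sub>i\<^sup>2\<close>.\<close>
lemma rho_le_ceiling: "rho st2 N sn2 sv2 h a \<le> st2 * kappa"
proof -
  define D where "D = (\<Sum>i<N. (cmod (a i))\<^sup>2 * (cmod (h i))\<^sup>2 * sv2 i)"
  have D: "D \<ge> 0" unfolding D_def by (rule interference_nonneg)
  have "(cmod (\<Sum>i<N. cnj (a i) * h i))\<^sup>2 \<le> D * kappa"
    unfolding D_def by (rule weighted_cauchy_schwarz_complex[OF sv2_pos])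
  also have "\<dots> \<le> (D + sn2) * kappa" using kappa_pos sn2_pos by simp
  finally show ?thesis
    unfolding rho_def D_def[symmetric] using D sn2_pos st2_pos
    by (simp add: divide_le_eq mult_left_mono mult.assoc mult.commute)
qed

text \<open>The noise-limited bound: ignoring interference, the SNR is at most \<open>st2 P \<parallel>h\<parallel>\<^sup>2 / sn2\<close>.\<close>
lemma rho_le_noise_limited:
  assumes "(\<Sum>i<N. (cmod (a i))\<^sup>2) = P"
  shows "rho st2 N sn2 sv2 h a \<le> st2 * P * (\<Sum>i<N. (cmod (h i))\<^sup>2) / sn2"
proof -
  define X where "X = (cmod (\<Sum>i<N. cnj (a i) * h i))\<^sup>2"
  have "rho st2 N sn2 sv2 h a \<le> st2 * X / sn2"
    unfolding rho_def X_def[symmetric] using interference_nonneg[of a h] sn2_pos st2_pos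
    by (intro divide_left_mono) (auto simp: X_def)
  also have "\<dots> \<le> st2 * (P * (\<Sum>i<N. (cmod (h i))\<^sup>2)) / sn2"
    unfolding X_def using cauchy_schwarz_complex[of a h N] assms st2_pos sn2_pos
    by (intro divide_right_mono mult_left_mono) auto
  finally show ?thesis by simp
qed

text \<open>Scaling a beamformer by \<open>c\<close> scales signal and interference by \<open>c\<^sup>2\<close>, but not the noise;
  hence scaling up never lowers the SNR.\<close>
lemma rho_scale_mono:
  assumes c: "c \<ge> 1"
  shows "rho st2 N sn2 sv2 h a \<le> rho st2 N sn2 sv2 h (\<lambda>i. complex_of_real c * a i)"
proof -
  define X where "X = (cmod (\<Sum>i<N. cnj (a i) * h i))\<^sup>2"
  define D where "D = (\<Sum>i<N. (cmod (a i))\<^sup>2 * (cmod (h i))\<^sup>2 * sv2 i)"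
  have c2: "c\<^sup>2 \<ge> 1" using c by (simp add: one_le_power)
  have D: "D \<ge> 0" unfolding D_def by (rule interference_nonneg)
  have scaled: "rho st2 N sn2 sv2 h (\<lambda>i. complex_of_real c * a i) = st2 * (c\<^sup>2 * X) / (c\<^sup>2 * D + sn2)"
  proof -
    have signal: "(\<Sum>i<N. cnj (complex_of_real c * a i) * h i) = complex_of_real c * (\<Sum>i<N. cnj (a i) * h i)"
      by (simp add: sum_distrib_left mult.assoc)
    have interference: "(\<Sum>i<N. (cmod (complex_of_real c * a i))\<^sup>2 * (cmod (h i))\<^sup>2 * sv2 i) = c\<^sup>2 * D"
      unfolding D_def sum_distrib_left by (simp add: norm_mult power_mult_distrib mult.assoc)
    show ?thesis
      unfolding rho_def signal interference X_def by (simp add: norm_mult power_mult_distrib)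
  qed
  have "rho st2 N sn2 sv2 h a = st2 * (c\<^sup>2 * X) / (c\<^sup>2 * D + c\<^sup>2 * sn2)"
    unfolding rho_def X_def[symmetric] D_def[symmetric] using c
    by (simp add: distrib_left[symmetric] mult.left_commute)
  also have "\<dots> \<le> st2 * (c\<^sup>2 * X) / (c\<^sup>2 * D + sn2)"
  proof (rule divide_left_mono)
    have "0 < c\<^sup>2 * D + sn2" using c2 D sn2_pos by (simp add: add_nonneg_pos)
    moreover have "0 < c\<^sup>2 * D + c\<^sup>2 * sn2"
      using c2 D sn2_pos by (intro add_nonneg_pos mult_nonneg_nonneg mult_pos_pos) auto
    ultimately show "0 < (c\<^sup>2 * D + c\<^sup>2 * sn2) * (c\<^sup>2 * D + sn2)" by simp
  qed (use c2 st2_pos sn2_pos in \<open>simp_all add: X_def\<close>)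
  finally show ?thesis unfolding scaled .
qed

lemma beam_power_feasible:
  assumes "P \<ge> 0"
  shows "(\<Sum>i<N. (cmod (if i = 0 then complex_of_real (sqrt P) else 0))\<^sup>2) = P"
proof -
  have "(\<Sum>i<N. (cmod (if i = 0 then complex_of_real (sqrt P) else 0))\<^sup>2)
      = (\<Sum>i<N. if i = 0 then P else 0)"
    using assms by (intro sum.cong) auto
  also have "\<dots> = P" using N_pos by simp
  finally show ?thesis .
qed

lemma S_upper:
  assumes "(\<Sum>i<N. (cmod (a i))\<^sup>2) = P"
  shows "rho st2 N sn2 sv2 h a \<le> S_single st2 N sn2 sv2 P h"
  unfolding S_single_def using assms rho_le_ceiling by (intro cSup_upper bdd_aboveI2) auto

lemma S_least:
  assumes "P \<ge> 0" and "\<And>a. (\<Sum>i<N. (cmod (a i))\<^sup>2) = P \<Longrightarrow> rho st2 N sn2 sv2 h a \<le> y"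
  shows "S_single st2 N sn2 sv2 P h \<le> y"
  unfolding S_single_def
proof (rule cSup_least)
  have "rho st2 N sn2 sv2 h (\<lambda>i. if i = 0 then complex_of_real (sqrt P) else 0)
          \<in> rho st2 N sn2 sv2 h ` {a. (\<Sum>i<N. (cmod (a i))\<^sup>2) = P}"
    by (rule imageI) (simp add: beam_power_feasible[OF assms(1)])
  then show "rho st2 N sn2 sv2 h ` {a. (\<Sum>i<N. (cmod (a i))\<^sup>2) = P} \<noteq> {}" by blast
qed (use assms(2) in auto)

lemma S_nonneg:
  assumes "P \<ge> 0"
  shows "0 \<le> S_single st2 N sn2 sv2 P h"
  using rho_nonneg S_upper[OF beam_power_feasible[OF assms]] by (rule order_trans)

lemma S_le_ceiling: "P \<ge> 0 \<Longrightarrow> S_single st2 N sn2 sv2 P h \<le> st2 * kappa"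
  by (rule S_least) (auto intro: rho_le_ceiling)

lemma S_le_noise_limited:
  "P \<ge> 0 \<Longrightarrow> S_single st2 N sn2 sv2 P h \<le> st2 * P * (\<Sum>i<N. (cmod (h i))\<^sup>2) / sn2"
  by (rule S_least) (auto intro: rho_le_noise_limited)

text \<open>More power can always be used by rescaling the beamformer.\<close>
lemma S_mono:
  assumes P: "0 < P" "P \<le> P'"
  shows "S_single st2 N sn2 sv2 P h \<le> S_single st2 N sn2 sv2 P' h"
proof (rule S_least)
  fix a assume a: "(\<Sum>i<N. (cmod (a i))\<^sup>2) = P"
  define c where "c = sqrt (P' / P)"
  have c: "c \<ge> 1" "c\<^sup>2 = P' / P" unfolding c_def using P by auto
  have "(\<Sum>i<N. (cmod (complex_of_real c * a i))\<^sup>2) = (\<Sum>i<N. c\<^sup>2 * (cmod (a i))\<^sup>2)"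
    by (simp add: norm_mult power_mult_distrib)
  also have "\<dots> = c\<^sup>2 * P" unfolding sum_distrib_left[symmetric] a ..
  finally have "(\<Sum>i<N. (cmod (complex_of_real c * a i))\<^sup>2) = P'" using c P by simp
  then show "rho st2 N sn2 sv2 h a \<le> S_single st2 N sn2 sv2 P' h"
    using rho_scale_mono[OF c(1), of h a] S_upper[of "\<lambda>i. complex_of_real c * a i" P' h]
    by linarith
qed (use P in simp)

text \<open>The matched beamformer \<open>a\<^sub>i = t / (conj h\<^sub>i \<sigma>\<^sub>v\<^sub>,\<^sub>i\<^sup>2)\<close> equalises the Cauchy-Schwarz bound up to the
  noise: its SNR is \<open>st2 kappa \<cdot> t\<^sup>2 kappa / (sn2 + t\<^sup>2 kappa)\<close> at power \<open>t\<^sup>2 L\<close>.\<close>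
lemma matched_beamformer:
  fixes t :: real
  assumes h: "\<forall>i<N. h i \<noteq> 0"
  defines "L \<equiv> \<Sum>i<N. 1 / ((cmod (h i))\<^sup>2 * (sv2 i)\<^sup>2)"
    and "a \<equiv> \<lambda>i. complex_of_real t / (cnj (h i) * complex_of_real (sv2 i))"
  shows "(\<Sum>i<N. (cmod (a i))\<^sup>2) = t\<^sup>2 * L"
    and "rho st2 N sn2 sv2 h a = st2 * kappa * (t\<^sup>2 * kappa / (sn2 + t\<^sup>2 * kappa))"
proof -
  have gain: "cnj (a i) * h i = complex_of_real (t / sv2 i)" if "i < N" for i
    using h that sv2_pos[OF that] unfolding a_def by (simp add: field_simps)
  have energy: "(cmod (a i))\<^sup>2 = t\<^sup>2 * (1 / ((cmod (h i))\<^sup>2 * (sv2 i)\<^sup>2))" if "i < N" for i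
    using h that sv2_pos[OF that] unfolding a_def
    by (simp add: norm_divide norm_mult power_divide power_mult_distrib)
  have "(\<Sum>i<N. cnj (a i) * h i) = complex_of_real (t * kappa)"
    by (simp add: gain sum_distrib_left)
  then have signal: "(cmod (\<Sum>i<N. cnj (a i) * h i))\<^sup>2 = t\<^sup>2 * kappa\<^sup>2"
    by (simp only: norm_of_real power2_abs power_mult_distrib)
  have "(cmod (a i))\<^sup>2 * (cmod (h i))\<^sup>2 * sv2 i = t\<^sup>2 * (1 / sv2 i)" if "i < N" for i
    unfolding energy[OF that] using h that sv2_pos[OF that] by (simp add: field_simps power2_eq_square)
  then have interference: "(\<Sum>i<N. (cmod (a i))\<^sup>2 * (cmod (h i))\<^sup>2 * sv2 i) = t\<^sup>2 * kappa"
    by (simp add: sum_distrib_left)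
  show "(\<Sum>i<N. (cmod (a i))\<^sup>2) = t\<^sup>2 * L"
    unfolding L_def sum_distrib_left by (simp add: energy)
  show "rho st2 N sn2 sv2 h a = st2 * kappa * (t\<^sup>2 * kappa / (sn2 + t\<^sup>2 * kappa))"
    unfolding rho_def signal interference by (simp add: power2_eq_square mult_ac add.commute)
qed

lemma S_ge_matched:
  assumes h: "\<forall>i<N. h i \<noteq> 0" and P: "P \<ge> 0"
  defines "L \<equiv> \<Sum>i<N. 1 / ((cmod (h i))\<^sup>2 * (sv2 i)\<^sup>2)"
  shows "L > 0"
    and "st2 * kappa * (kappa / L * P / (sn2 + kappa / L * P)) \<le> S_single st2 N sn2 sv2 P h"
proof -
  have "0 < 1 / ((cmod (h i))\<^sup>2 * (sv2 i)\<^sup>2)" if "i < N" for i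
    using h sv2_pos[OF that] that by simp
  then show L: "L > 0" unfolding L_def using N_pos by (intro sum_pos) (auto simp: lessThan_empty_iff)
  define t where "t = sqrt (P / L)"
  have t2: "t\<^sup>2 = P / L" unfolding t_def using P L by simp
  have scaled_power: "t\<^sup>2 * kappa = kappa / L * P" using t2 by simp
  note beam = matched_beamformer[OF h, of t, folded L_def]
  have "rho st2 N sn2 sv2 h (\<lambda>i. complex_of_real t / (cnj (h i) * complex_of_real (sv2 i)))
          \<le> S_single st2 N sn2 sv2 P h"
    by (rule S_upper) (use beam(1) t2 L in simp)
  then show "st2 * kappa * (kappa / L * P / (sn2 + kappa / L * P)) \<le> S_single st2 N sn2 sv2 P h"
    unfolding beam(2) scaled_power .
qed

lemma S_pos: "\<forall>i<N. h i \<noteq> 0 \<Longrightarrow> P > 0 \<Longrightarrow> 0 < S_single st2 N sn2 sv2 P h"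
  using S_ge_matched[of h P] kappa_pos st2_pos sn2_pos
  by (smt (verit) divide_pos_pos mult_pos_pos)

lemma S_tendsto_ceiling:
  assumes h: "\<forall>i<N. h i \<noteq> 0"
  shows "((\<lambda>P. S_single st2 N sn2 sv2 P h) \<longlongrightarrow> st2 * kappa) at_top"
proof (rule tendsto_sandwich)
  define L where "L = (\<Sum>i<N. 1 / ((cmod (h i))\<^sup>2 * (sv2 i)\<^sup>2))"
  have L: "L > 0" unfolding L_def using S_ge_matched(1)[OF h order_refl] .
  have "((\<lambda>P. kappa / L * P / (sn2 + kappa / L * P)) \<longlongrightarrow> 1) at_top"
    using saturation_tendsto[of "kappa / L" sn2 1 "\<lambda>P. P" at_top] kappa_pos L sn2_pos filterlim_ident
    unfolding mult_1_left div_by_1 by (metis divide_pos_pos zero_less_one)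
  from tendsto_mult_left[OF this, of "st2 * kappa"]
  show "((\<lambda>P. st2 * kappa * (kappa / L * P / (sn2 + kappa / L * P))) \<longlongrightarrow> st2 * kappa) at_top"
    by (simp only: mult_1_right)
  show "\<forall>\<^sub>F P in at_top. st2 * kappa * (kappa / L * P / (sn2 + kappa / L * P))
                        \<le> S_single st2 N sn2 sv2 P h"
    using eventually_ge_at_top[of 0] by eventually_elim (use S_ge_matched[OF h] L_def in auto)
  show "\<forall>\<^sub>F P in at_top. S_single st2 N sn2 sv2 P h \<le> st2 * kappa"
    using eventually_ge_at_top[of 0] by eventually_elim (rule S_le_ceiling)
qed simp

lemma noise_floor_pos:
  assumes "i < N"
  shows "0 < sn2 * d i powr alpha"
  using sn2_pos d_pos[OF assms] by simp

text \<open>Each summand of \<open>g\<^sub>M\<close> is a saturating term with gain \<open>M\<close>, noise \<open>sn2 d\<^sub>i\<^sup>\<alpha>\<close> and variance \<open>\<sigma>\<^sub>v\<^sub>,\<^sub>i\<^sup>2\<close>.\<close>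

lemma gM_nonneg:
  assumes x: "\<forall>i<N. 0 \<le> x i"
  shows "0 \<le> gM N sn2 sv2 d alpha M x"
  unfolding gM_def
proof (rule sum_nonneg)
  fix i assume "i \<in> {..<N}"
  then have "0 < sn2 * d i powr alpha" "0 \<le> sv2 i * real M * x i" "0 \<le> x i"
    using x noise_floor_pos sv2_pos[of i] by auto
  then show "0 \<le> real M * x i / (sn2 * d i powr alpha + sv2 i * real M * x i)" by simp
qed

lemma gM_le_kappa: "\<forall>i<N. 0 \<le> x i \<Longrightarrow> gM N sn2 sv2 d alpha M x \<le> kappa"
  unfolding gM_def by (intro sum_mono saturation_le) (auto simp: noise_floor_pos sv2_pos)

lemma gM_mono:
  "\<forall>i<N. 0 \<le> x i \<Longrightarrow> \<forall>i<N. x i \<le> x' i \<Longrightarrow> gM N sn2 sv2 d alpha M x \<le> gM N sn2 sv2 d alpha M x'"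
  unfolding gM_def by (intro sum_mono saturation_mono) (auto simp: noise_floor_pos sv2_pos less_imp_le)

lemma uniform_allocation: "P \<ge> 0 \<Longrightarrow> (\<forall>i<N. 0 \<le> P / real N) \<and> (\<Sum>i<N. P / real N) = P"
  using N_pos by simp

lemma GM_upper:
  assumes "\<forall>i<N. 0 \<le> x i" "(\<Sum>i<N. x i) = P"
  shows "gM N sn2 sv2 d alpha M x \<le> GM N sn2 sv2 d alpha M P"
  unfolding GM_def using assms gM_le_kappa by (intro cSup_upper bdd_aboveI2) auto

lemma GM_least:
  assumes "P \<ge> 0" and "\<And>x. \<forall>i<N. 0 \<le> x i \<Longrightarrow> (\<Sum>i<N. x i) = P \<Longrightarrow> gM N sn2 sv2 d alpha M x \<le> y"
  shows "GM N sn2 sv2 d alpha M P \<le> y"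
  unfolding GM_def
proof (rule cSup_least)
  have "gM N sn2 sv2 d alpha M (\<lambda>i. P / real N)
          \<in> gM N sn2 sv2 d alpha M ` {x. (\<forall>i<N. 0 \<le> x i) \<and> (\<Sum>i<N. x i) = P}"
    using uniform_allocation[OF assms(1)] by (intro imageI) simp
  then show "gM N sn2 sv2 d alpha M ` {x. (\<forall>i<N. 0 \<le> x i) \<and> (\<Sum>i<N. x i) = P} \<noteq> {}" by blast
qed (use assms(2) in auto)

lemma GM_nonneg:
  assumes "P \<ge> 0"
  shows "0 \<le> GM N sn2 sv2 d alpha M P"
proof -
  have "0 \<le> gM N sn2 sv2 d alpha M (\<lambda>i. P / real N)"
    using uniform_allocation[OF assms] by (intro gM_nonneg) simp
  also have "\<dots> \<le> GM N sn2 sv2 d alpha M P"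
    using uniform_allocation[OF assms] by (intro GM_upper) simp_all
  finally show ?thesis .
qed

lemma GM_le_kappa: "P \<ge> 0 \<Longrightarrow> GM N sn2 sv2 d alpha M P \<le> kappa"
  by (rule GM_least) (auto intro: gM_le_kappa)

text \<open>Extra power can be given to the first sensor, which never lowers \<open>g\<^sub>M\<close>.\<close>
lemma GM_mono:
  assumes P: "0 \<le> P" "P \<le> P'"
  shows "GM N sn2 sv2 d alpha M P \<le> GM N sn2 sv2 d alpha M P'"
proof (rule GM_least[OF P(1)])
  fix x assume x: "\<forall>i<N. 0 \<le> x i" "(\<Sum>i<N. x i) = P"
  define x' where "x' i = x i + (if i = 0 then P' - P else 0)" for i
  have more: "\<forall>i<N. x i \<le> x' i" unfolding x'_def using P by auto
  have "(\<Sum>i<N. x' i) = P'" unfolding x'_def sum.distrib using x N_pos by simp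
  then have "gM N sn2 sv2 d alpha M x' \<le> GM N sn2 sv2 d alpha M P'"
    using x(1) P unfolding x'_def by (intro GM_upper) simp_all
  then show "gM N sn2 sv2 d alpha M x \<le> GM N sn2 sv2 d alpha M P'"
    using gM_mono[OF x(1) more, where M = M] by linarith
qed

text \<open>With growing power, the uniform allocation already saturates every sensor.\<close>
lemma GM_tendsto_kappa:
  assumes "M > 0"
  shows "(GM N sn2 sv2 d alpha M \<longlongrightarrow> kappa) at_top"
proof (rule tendsto_sandwich)
  have "filterlim (\<lambda>P. 1 / real N * P) at_top at_top"
    using N_pos by (intro filterlim_tendsto_pos_mult_at_top[OF tendsto_const] filterlim_ident) auto
  then have "filterlim (\<lambda>P. P / real N) at_top at_top" by simp
  then show "((\<lambda>P. gM N sn2 sv2 d alpha M (\<lambda>i. P / real N)) \<longlongrightarrow> kappa) at_top"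
    unfolding gM_def using assms noise_floor_pos sv2_pos
    by (intro tendsto_sum saturation_tendsto) auto
  show "\<forall>\<^sub>F P in at_top. gM N sn2 sv2 d alpha M (\<lambda>i. P / real N) \<le> GM N sn2 sv2 d alpha M P"
    using eventually_ge_at_top[of 0]
    by eventually_elim (intro GM_upper, use N_pos in simp_all)
  show "\<forall>\<^sub>F P in at_top. GM N sn2 sv2 d alpha M P \<le> kappa"
    using eventually_ge_at_top[of 0] by eventually_elim (rule GM_le_kappa)
qed simp

text \<open>\<open>P\<^sub>M\<close> gives every sensor half its noise-to-variance ratio, divided by \<open>M\<close>;
  \<open>\<zeta>\<^sub>M\<close> is the noise-limited single-antenna SNR bound at that power.\<close>
abbreviation budget :: "nat \<Rightarrow> real" where
  "budget M \<equiv> 1 / (2 * real M) * (\<Sum>i<N. sn2 * d i powr alpha / sv2 i)"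

abbreviation zeta_bound :: "(nat \<Rightarrow> complex) \<Rightarrow> nat \<Rightarrow> real" where
  "zeta_bound h M \<equiv> (\<Sum>i<N. (cmod (h i))\<^sup>2) / (2 * real M) * (\<Sum>i<N. st2 * d i powr alpha / sv2 i)"

lemma noise_ratio_sum_pos: "0 < (\<Sum>i<N. sn2 * d i powr alpha / sv2 i)"
  using N_pos noise_floor_pos sv2_pos by (intro sum_pos) (auto simp: lessThan_empty_iff)

lemma budget_nonneg: "0 \<le> budget M"
  using noise_ratio_sum_pos by simp

lemma budget_pos: "M \<ge> 1 \<Longrightarrow> 0 < budget M"
  using noise_ratio_sum_pos by simp

lemma noise_limited_at_budget: "st2 * budget M * (\<Sum>i<N. (cmod (h i))\<^sup>2) / sn2 = zeta_bound h M"
proof -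
  have "(\<Sum>i<N. st2 * d i powr alpha / sv2 i) = st2 / sn2 * (\<Sum>i<N. sn2 * d i powr alpha / sv2 i)"
    unfolding sum_distrib_left using sn2_pos by (intro sum.cong) auto
  then show ?thesis by simp
qed

lemma half_noise_allocation:
  assumes M: "M \<ge> 1"
  defines "x \<equiv> \<lambda>i. sn2 * d i powr alpha / sv2 i / (2 * real M)"
  shows "\<forall>i<N. 0 \<le> x i" and "(\<Sum>i<N. x i) = budget M"
    and "gM N sn2 sv2 d alpha M x = kappa / 3"
proof -
  show "\<forall>i<N. 0 \<le> x i" unfolding x_def using noise_floor_pos sv2_pos by (simp add: less_imp_le)
  show "(\<Sum>i<N. x i) = budget M" unfolding x_def by (simp add: sum_divide_distrib)
  have "real M * x i / (sn2 * d i powr alpha + sv2 i * real M * x i) = 1 / sv2 i / 3" if "i < N" for i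
    using noise_floor_pos[OF that] sv2_pos[OF that] M unfolding x_def
    by (intro saturation_at_half_noise) auto
  then show "gM N sn2 sv2 d alpha M x = kappa / 3"
    unfolding gM_def by (simp add: sum_divide_distrib)
qed

lemma GM_budget_ge_third:
  assumes "M \<ge> 1"
  shows "kappa / 3 \<le> GM N sn2 sv2 d alpha M (budget M)"
proof -
  note allocation = half_noise_allocation[OF assms]
  have "gM N sn2 sv2 d alpha M (\<lambda>i. sn2 * d i powr alpha / sv2 i / (2 * real M))
          \<le> GM N sn2 sv2 d alpha M (budget M)"
    by (rule GM_upper[OF allocation(1,2)])
  then show ?thesis unfolding allocation(3) .
qed

lemma sensing_ratio_sum_pos: "0 < (\<Sum>i<N. st2 * d i powr alpha / sv2 i)"
proof -
  have "0 < st2 * d i powr alpha / sv2 i" if "i < N" for i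
    using st2_pos d_pos[OF that] sv2_pos[OF that] by simp
  then show ?thesis using N_pos by (intro sum_pos) (auto simp: lessThan_empty_iff)
qed

lemma zeta_bound_nonneg: "0 \<le> zeta_bound h M"
  using sensing_ratio_sum_pos by (simp add: sum_nonneg)

lemma PD_multi_at_budget:
  assumes eps: "0 < eps" "eps < 1" and M: "M \<ge> 1"
  shows "eps powr (1 / (1 + st2 / 3 * kappa)) \<le> PD_multi eps st2 N sn2 sv2 d alpha M (budget M)"
proof -
  have "st2 / 3 * kappa \<le> st2 * GM N sn2 sv2 d alpha M (budget M)"
    using GM_budget_ge_third[OF M] st2_pos by (simp add: mult_left_mono)
  then show ?thesis
    unfolding PD_multi_def using eps st2_pos kappa_pos by (intro detection_prob_mono) auto
qed

lemma third_ceiling_beats_false_alarm: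
  "0 < eps \<Longrightarrow> eps < 1 \<Longrightarrow> eps < eps powr (1 / (1 + st2 / 3 * kappa))"
  using st2_pos kappa_pos by (intro detection_prob_gt_false_alarm) auto

lemma PD_single_at_budget:
  assumes eps: "0 < eps" "eps < 1"
  shows "eps \<le> PD_single eps st2 N sn2 sv2 (budget M) h"
    and "PD_single eps st2 N sn2 sv2 (budget M) h \<le> eps powr (1 / (1 + zeta_bound h M))"
proof -
  have S: "0 \<le> S_single st2 N sn2 sv2 (budget M) h" "S_single st2 N sn2 sv2 (budget M) h \<le> zeta_bound h M"
    using S_nonneg[OF budget_nonneg] S_le_noise_limited[OF budget_nonneg, where h = h]
    unfolding noise_limited_at_budget by auto
  have "eps = eps powr (1 / (1 + 0))" using eps by simp
  also have "\<dots> \<le> PD_single eps st2 N sn2 sv2 (budget M) h"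
    unfolding PD_single_def using eps S(1) by (intro detection_prob_mono) simp_all
  finally show "eps \<le> PD_single eps st2 N sn2 sv2 (budget M) h" .
  show "PD_single eps st2 N sn2 sv2 (budget M) h \<le> eps powr (1 / (1 + zeta_bound h M))"
    unfolding PD_single_def using eps S by (rule detection_prob_mono)
qed

lemma PD_single_at_budget_gt:
  assumes "0 < eps" "eps < 1" and h: "\<forall>i<N. h i \<noteq> 0" and M: "M \<ge> 1"
  shows "eps < PD_single eps st2 N sn2 sv2 (budget M) h"
  unfolding PD_single_def using assms S_pos[OF h budget_pos[OF M]]
  by (intro detection_prob_gt_false_alarm)

text \<open>For a random channel, \<open>\<zeta>\<^sub>M\<close> is the channel energy (a fixed random variable) times \<open>C / (2M)\<close>.\<close>
lemma zeta_conv_in_prob: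
  assumes Q: "prob_space Q" and H: "\<And>i. i < N \<Longrightarrow> H i \<in> borel_measurable Q"
  shows "conv_in_prob Q (\<lambda>M \<omega>. zeta_bound (\<lambda>i. H i \<omega>) M) 0"
proof -
  define f where "f \<omega> = (\<Sum>i<N. (cmod (H i \<omega>))\<^sup>2)" for \<omega>
  define C where "C = (\<Sum>i<N. st2 * d i powr alpha / sv2 i)"
  have "f \<in> borel_measurable Q" unfolding f_def using H by measurable
  have "0 < C" unfolding C_def by (rule sensing_ratio_sum_pos)
  have scaled: "zeta_bound (\<lambda>i. H i \<omega>) M = C / 2 * (f \<omega> / real M)" for M \<omega>
    unfolding f_def C_def by simp
  show ?thesis
  proof (rule conv_in_prob_transfer[OF conv_in_prob_divide_index[OF Q \<open>f \<in> _\<close>]])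
    fix e :: real assume "e > 0"
    have "2 * e / C < \<bar>f \<omega> / real M - 0\<bar>" if "e < \<bar>zeta_bound (\<lambda>i. H i \<omega>) M - 0\<bar>" for M \<omega>
    proof -
      have "e < C / 2 * \<bar>f \<omega> / real M\<bar>"
        using that \<open>0 < C\<close> unfolding scaled by (simp add: abs_mult)
      then have "2 * e < C * \<bar>f \<omega> / real M\<bar>" by linarith
      then show ?thesis using \<open>0 < C\<close> by (subst pos_divide_less_eq) (auto simp: mult.commute)
    qed
    then show "\<exists>\<delta>>0. \<forall>M. \<forall>\<omega>\<in>space Q. e < \<bar>zeta_bound (\<lambda>i. H i \<omega>) M - 0\<bar> \<longrightarrow> \<delta> < \<bar>f \<omega> / real M - 0\<bar>"
      using \<open>e > 0\<close> \<open>0 < C\<close> by (intro exI[of _ "2 * e / C"]) auto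
  qed
qed

lemma PD_single_conv_in_prob:
  assumes eps: "0 < eps" "eps < 1"
    and Q: "prob_space Q" and H: "\<And>i. i < N \<Longrightarrow> H i \<in> borel_measurable Q"
  shows "conv_in_prob Q (\<lambda>M \<omega>. PD_single eps st2 N sn2 sv2 (budget M) (\<lambda>i. H i \<omega>)) eps"
proof (rule conv_in_prob_transfer[OF zeta_conv_in_prob[OF Q H]])
  fix e :: real assume "e > 0"
  obtain \<delta> where "\<delta> > 0" and \<delta>: "eps powr (1 / (1 + \<delta>)) < eps + e"
    using detection_prob_near_false_alarm[OF eps \<open>e > 0\<close>] by blast
  have "\<delta> < \<bar>zeta_bound (\<lambda>i. H i \<omega>) M - 0\<bar>"
    if far: "e < \<bar>PD_single eps st2 N sn2 sv2 (budget M) (\<lambda>i. H i \<omega>) - eps\<bar>" for M \<omega>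
  proof (rule ccontr)
    assume "\<not> ?thesis"
    moreover have "0 \<le> zeta_bound (\<lambda>i. H i \<omega>) M" by (rule zeta_bound_nonneg)
    ultimately have "zeta_bound (\<lambda>i. H i \<omega>) M \<le> \<delta>" by linarith
    then have "eps powr (1 / (1 + zeta_bound (\<lambda>i. H i \<omega>) M)) \<le> eps powr (1 / (1 + \<delta>))"
      using eps zeta_bound_nonneg by (intro detection_prob_mono)
    then show False using PD_single_at_budget[OF eps, of M "\<lambda>i. H i \<omega>"] far \<delta> by linarith
  qed
  then show "\<exists>\<delta>>0. \<forall>M. \<forall>\<omega>\<in>space Q. e < \<bar>PD_single eps st2 N sn2 sv2 (budget M) (\<lambda>i. H i \<omega>) - eps\<bar>
               \<longrightarrow> \<delta> < \<bar>zeta_bound (\<lambda>i. H i \<omega>) M - 0\<bar>"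
    using \<open>\<delta> > 0\<close> by blast
qed

lemma PD_multi_le_limit:
  assumes "0 < eps" "eps < 1" "P \<ge> 0"
  shows "PD_multi eps st2 N sn2 sv2 d alpha M P \<le> eps powr (1 / (1 + st2 * kappa))"
  unfolding PD_multi_def using assms st2_pos GM_nonneg[OF assms(3)] GM_le_kappa[OF assms(3)]
  by (intro detection_prob_mono) (auto intro: mult_left_mono)

lemma PD_single_le_limit:
  assumes "0 < eps" "eps < 1" "P \<ge> 0"
  shows "PD_single eps st2 N sn2 sv2 P h \<le> eps powr (1 / (1 + st2 * kappa))"
  unfolding PD_single_def using assms S_nonneg[OF assms(3)] S_le_ceiling[OF assms(3)]
  by (intro detection_prob_mono) auto

lemma PD_multi_mono:
  assumes "0 < eps" "eps < 1"
  shows "mono_on {0<..} (PD_multi eps st2 N sn2 sv2 d alpha M)"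
proof (rule mono_onI)
  fix P P' :: real assume "P \<in> {0<..}" "P' \<in> {0<..}" "P \<le> P'"
  then show "PD_multi eps st2 N sn2 sv2 d alpha M P \<le> PD_multi eps st2 N sn2 sv2 d alpha M P'"
    unfolding PD_multi_def using assms st2_pos GM_nonneg[of P M] GM_mono[of P P' M]
    by (intro detection_prob_mono) (auto intro: mult_left_mono)
qed

lemma PD_single_mono:
  assumes "0 < eps" "eps < 1"
  shows "mono_on {0<..} (\<lambda>P. PD_single eps st2 N sn2 sv2 P h)"
proof (rule mono_onI)
  fix P P' :: real assume "P \<in> {0<..}" "P' \<in> {0<..}" "P \<le> P'"
  then show "PD_single eps st2 N sn2 sv2 P h \<le> PD_single eps st2 N sn2 sv2 P' h"
    unfolding PD_single_def using assms S_nonneg[of P h] S_mono[of P P' h]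
    by (intro detection_prob_mono) auto
qed

lemma PD_multi_tendsto:
  assumes "0 < eps" and "M \<ge> 1"
  shows "(PD_multi eps st2 N sn2 sv2 d alpha M \<longlongrightarrow> eps powr (1 / (1 + st2 * kappa))) at_top"
  unfolding PD_multi_def[abs_def] using assms mult_pos_pos[OF st2_pos kappa_pos]
  by (intro detection_prob_tendsto tendsto_mult_left GM_tendsto_kappa) auto

lemma PD_single_tendsto:
  assumes "0 < eps" and h: "\<forall>i<N. h i \<noteq> 0"
  shows "((\<lambda>P. PD_single eps st2 N sn2 sv2 P h) \<longlongrightarrow> eps powr (1 / (1 + st2 * kappa))) at_top"
  unfolding PD_single_def using assms mult_pos_pos[OF st2_pos kappa_pos]
  by (intro detection_prob_tendsto S_tendsto_ceiling) auto

end

theorem theorem2: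
  fixes N :: nat and eps st2 sn2 alpha :: real and sv2 d :: "nat \<Rightarrow> real"
  assumes N: "N \<ge> 1"
    and eps: "0 < eps" "eps < 1"
    and st2: "st2 > 0" and sn2: "sn2 > 0" and alpha: "alpha > 0"
    and sv2: "\<And>i. i < N \<Longrightarrow> sv2 i > 0"
    and d: "\<And>i. i < N \<Longrightarrow> d i > 0"
  defines "PMM \<equiv> (\<lambda>M::nat. 1 / (2 * real M) * (\<Sum>i<N. sn2 * d i powr alpha / sv2 i))"
    and "zeta \<equiv> (\<lambda>(h::nat \<Rightarrow> complex) (M::nat).
            (\<Sum>i<N. (cmod (h i))\<^sup>2) / (2 * real M) * (\<Sum>i<N. st2 * d i powr alpha / sv2 i))"
    and "PDlim \<equiv> eps powr (1 / (1 + st2 * (\<Sum>i<N. 1 / sv2 i)))"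
  shows
    \<comment> \<open>(a)\<close>
    "(\<forall>M::nat. M \<ge> 1 \<longrightarrow>
        PD_multi eps st2 N sn2 sv2 d alpha M (PMM M)
          \<ge> eps powr (1 / (1 + st2 / 3 * (\<Sum>i<N. 1 / sv2 i)))
      \<and> eps powr (1 / (1 + st2 / 3 * (\<Sum>i<N. 1 / sv2 i))) > eps)
     \<and>
    \<comment> \<open>(b), deterministic part\<close>
     (\<forall>h::nat \<Rightarrow> complex. (\<forall>i<N. h i \<noteq> 0) \<longrightarrow> (\<forall>M::nat. M \<ge> 1 \<longrightarrow>
        eps < PD_single eps st2 N sn2 sv2 (PMM M) h
      \<and> PD_single eps st2 N sn2 sv2 (PMM M) h \<le> eps powr (1 / (1 + zeta h M))))
     \<and>
    \<comment> \<open>(b), random channel part\<close>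
     (\<forall>(Q::'a measure) (H::nat \<Rightarrow> 'a \<Rightarrow> complex).
        prob_space Q
        \<and> prob_space.indep_vars Q (\<lambda>_. borel) H {..<N}
        \<and> (\<forall>i<N. distributed Q lborel (H i) (cgauss_density (d i powr (- alpha))))
        \<longrightarrow> conv_in_prob Q (\<lambda>M \<omega>. zeta (\<lambda>i. H i \<omega>) M) 0
          \<and> conv_in_prob Q (\<lambda>M \<omega>. PD_single eps st2 N sn2 sv2 (PMM M) (\<lambda>i. H i \<omega>)) eps)
     \<and>
    \<comment> \<open>(c)\<close>
     (\<forall>M::nat. M \<ge> 1 \<longrightarrow> (\<forall>h::nat \<Rightarrow> complex. (\<forall>i<N. h i \<noteq> 0) \<longrightarrow>
        (\<forall>P>0. PD_multi eps st2 N sn2 sv2 d alpha M P \<le> PDlim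
               \<and> PD_single eps st2 N sn2 sv2 P h \<le> PDlim)
      \<and> mono_on {0<..} (PD_multi eps st2 N sn2 sv2 d alpha M)
      \<and> mono_on {0<..} (\<lambda>P. PD_single eps st2 N sn2 sv2 P h)
      \<and> (PD_multi eps st2 N sn2 sv2 d alpha M \<longlongrightarrow> PDlim) at_top
      \<and> ((\<lambda>P. PD_single eps st2 N sn2 sv2 P h) \<longlongrightarrow> PDlim) at_top))"
proof -
  interpret detection_model N st2 sn2 alpha sv2 d
    using N st2 sn2 sv2 d by unfold_locales auto
  have measurable: "H i \<in> borel_measurable Q"
    if "\<forall>i<N. distributed Q lborel (H i) (cgauss_density (d i powr (- alpha)))" "i < N"
    for Q :: "'a measure" and H i
    using distributed_measurable[OF that(1)[rule_format, OF that(2)]] by simp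
  show ?thesis
    unfolding PMM_def zeta_def PDlim_def
    apply (intro conjI allI impI)
    subgoal by (rule PD_multi_at_budget[OF eps])
    subgoal by (rule third_ceiling_beats_false_alarm[OF eps])
    subgoal by (rule PD_single_at_budget_gt[OF eps])
    subgoal by (rule PD_single_at_budget(2)[OF eps])
    subgoal by (elim conjE) (rule zeta_conv_in_prob, auto intro: measurable)
    subgoal by (elim conjE) (rule PD_single_conv_in_prob[OF eps], auto intro: measurable)
    subgoal by (rule PD_multi_le_limit[OF eps]) simp
    subgoal by (rule PD_single_le_limit[OF eps]) simp
    subgoal by (rule PD_multi_mono[OF eps])
    subgoal by (rule PD_single_mono[OF eps])
    subgoal by (rule PD_multi_tendsto[OF eps(1)])
    subgoal by (rule PD_single_tendsto[OF eps(1)])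
    done
qed

end
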